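(* Let $G$ be a graph without isolated vertices. Then (1) $\dfrac{2|V(G)|}{\Delta(G)+1}\le \gamma_{\times 2}(G)\le \gamma_{gr}^{\times 2}(G)\le |V(G)|+1-\delta(G)$; (2) $\gamma_{gr}(G)+1\le \gamma_{gr}^{\times 2}(G)\le 2\gamma_{gr}(G)$.
   Context: Graphs are finite, simple, undirected; $N[v]$ is the closed neighborhood, $\Delta(G)$ and $\delta(G)$ the maximum and minimum degree. A set $D$ is a double dominating set if $|N[w]\cap D|\ge 2$ for all $w\in V(G)$; $\gamma_{\times 2}(G)$ is the minimum size of a double dominating set. A sequence $(v_1,\dots,v_k)$ of distinct vertices is legal if $N[v_i]\setminus\bigcup_{j<i}N[v_j]\neq\emptyset$ for every $i\ge 2$; it is a dominating sequence if moreover $\{v_1,\dots,v_k\}$ is a dominating set; $\gamma_{gr}(G)$ (Grundy domination number) is the maximum length of a dominating sequence. A sequence $S=(v_1,\dots,v_k)$ of distinct vertices is a double neighborhood sequence (DNS) if for each $i$ some $u\in N[v_i]$ satisfies $|\{j<i: u\in N[v_j]\}|\le 1$; it is a double dominating sequence (DDS) if in addition its vertex set is a double dominating set. $\gamma_{gr}^{\times 2}(G)$ (Grundy double domination number) is the maximum length of a DDS. *)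

theory Defs
  imports Complex_Main
begin

definition graph :: "'a set \<Rightarrow> ('a \<Rightarrow> 'a \<Rightarrow> bool) \<Rightarrow> bool" where
  "graph V E \<longleftrightarrow> finite V \<and> (\<forall>x y. E x y \<longrightarrow> x \<in> V \<and> y \<in> V)
     \<and> (\<forall>x y. E x y \<longrightarrow> E y x) \<and> (\<forall>x. \<not> E x x)"

definition cnbhd :: "'a set \<Rightarrow> ('a \<Rightarrow> 'a \<Rightarrow> bool) \<Rightarrow> 'a \<Rightarrow> 'a set" where
  "cnbhd V E v = {u \<in> V. u = v \<or> E v u}"

definition degree :: "'a set \<Rightarrow> ('a \<Rightarrow> 'a \<Rightarrow> bool) \<Rightarrow> 'a \<Rightarrow> nat" where
  "degree V E v = card {u \<in> V. E v u}"

definition max_degree :: "'a set \<Rightarrow> ('a \<Rightarrow> 'a \<Rightarrow> bool) \<Rightarrow> nat" where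
  "max_degree V E = Max (degree V E ` V)"

definition min_degree :: "'a set \<Rightarrow> ('a \<Rightarrow> 'a \<Rightarrow> bool) \<Rightarrow> nat" where
  "min_degree V E = Min (degree V E ` V)"

definition no_isolated :: "'a set \<Rightarrow> ('a \<Rightarrow> 'a \<Rightarrow> bool) \<Rightarrow> bool" where
  "no_isolated V E \<longleftrightarrow> (\<forall>v \<in> V. \<exists>u. E v u)"

definition double_dom_set :: "'a set \<Rightarrow> ('a \<Rightarrow> 'a \<Rightarrow> bool) \<Rightarrow> 'a set \<Rightarrow> bool" where
  "double_dom_set V E D \<longleftrightarrow> D \<subseteq> V \<and> (\<forall>w \<in> V. card (cnbhd V E w \<inter> D) \<ge> 2)"

definition double_dom_number :: "'a set \<Rightarrow> ('a \<Rightarrow> 'a \<Rightarrow> bool) \<Rightarrow> nat" where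
  "double_dom_number V E = Min {card D | D. double_dom_set V E D}"

definition legal_seq :: "'a set \<Rightarrow> ('a \<Rightarrow> 'a \<Rightarrow> bool) \<Rightarrow> 'a list \<Rightarrow> bool" where
  "legal_seq V E xs \<longleftrightarrow> distinct xs \<and> set xs \<subseteq> V \<and>
     (\<forall>i < length xs. 1 \<le> i \<longrightarrow>
        cnbhd V E (xs ! i) - (\<Union>j < i. cnbhd V E (xs ! j)) \<noteq> {})"

definition dominating_seq :: "'a set \<Rightarrow> ('a \<Rightarrow> 'a \<Rightarrow> bool) \<Rightarrow> 'a list \<Rightarrow> bool" where
  "dominating_seq V E xs \<longleftrightarrow> legal_seq V E xs \<and>
     (\<forall>w \<in> V. \<exists>v \<in> set xs. w \<in> cnbhd V E v)"

definition grundy_dom :: "'a set \<Rightarrow> ('a \<Rightarrow> 'a \<Rightarrow> bool) \<Rightarrow> nat" where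
  "grundy_dom V E = Max {length xs | xs. dominating_seq V E xs}"

definition double_nbhd_seq :: "'a set \<Rightarrow> ('a \<Rightarrow> 'a \<Rightarrow> bool) \<Rightarrow> 'a list \<Rightarrow> bool" where
  "double_nbhd_seq V E xs \<longleftrightarrow> distinct xs \<and> set xs \<subseteq> V \<and>
     (\<forall>i < length xs. \<exists>u \<in> cnbhd V E (xs ! i).
        card {j. j < i \<and> u \<in> cnbhd V E (xs ! j)} \<le> 1)"

definition double_dom_seq :: "'a set \<Rightarrow> ('a \<Rightarrow> 'a \<Rightarrow> bool) \<Rightarrow> 'a list \<Rightarrow> bool" where
  "double_dom_seq V E xs \<longleftrightarrow> double_nbhd_seq V E xs \<and> double_dom_set V E (set xs)"

definition grundy_double_dom :: "'a set \<Rightarrow> ('a \<Rightarrow> 'a \<Rightarrow> bool) \<Rightarrow> nat" where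
  "grundy_double_dom V E = Max {length xs | xs. double_dom_seq V E xs}"

end

theory Submission
  imports Defs
begin

(* For a double dominating set D, counting the pairs (w, d) with d \<in> D \<inter> N[w] in two ways
   gives 2|V| \<le> |D|(\<Delta> + 1). In a double dominating sequence S the footprint u of the last
   vertex has at most two closed neighbours in S, hence deg u + 1 \<le> 2 + |V| - |S|.

   Legal and double neighbourhood sequences extend greedily to dominating and double
   dominating sequences. A Grundy dominating sequence is a double neighbourhood sequence
   whose last footprint is dominated only once, so its extension is proper. Conversely, a
   double neighbourhood sequence splits into two legal sequences: the footprint of each new
   vertex has at most one earlier closed neighbour, and the vertex joins the part that
   does not contain it. *)

lemma cnbhd_subset: "cnbhd V E v \<subseteq> V"
  unfolding cnbhd_def by auto

lemma self_in_cnbhd: "v \<in> V \<Longrightarrow> v \<in> cnbhd V E v"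
  unfolding cnbhd_def by auto

lemma cnbhd_sym:
  assumes "graph V E"
  shows "u \<in> cnbhd V E v \<longleftrightarrow> v \<in> cnbhd V E u"
  using assms unfolding graph_def cnbhd_def by auto

lemma finite_cnbhd: "graph V E \<Longrightarrow> finite (cnbhd V E v)"
  using cnbhd_subset finite_subset unfolding graph_def by metis

lemma card_cnbhd:
  assumes "graph V E" "v \<in> V"
  shows "card (cnbhd V E v) = degree V E v + 1"
proof -
  have "cnbhd V E v = insert v {u \<in> V. E v u}" and "v \<notin> {u \<in> V. E v u}"
    and "finite {u \<in> V. E v u}"
    using assms unfolding cnbhd_def graph_def by auto
  then show ?thesis
    unfolding degree_def by simp
qed

lemma two_le_card_cnbhd:
  assumes "graph V E" "no_isolated V E" "v \<in> V"
  shows "2 \<le> card (cnbhd V E v)"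
proof -
  obtain u where "E v u"
    using assms unfolding no_isolated_def by auto
  with assms have "{v, u} \<subseteq> cnbhd V E v" "u \<noteq> v"
    unfolding graph_def cnbhd_def by auto
  then have "card {v, u} \<le> card (cnbhd V E v)"
    by (intro card_mono finite_cnbhd[OF assms(1)])
  with \<open>u \<noteq> v\<close> show ?thesis
    by simp
qed

lemma card_dominators_eq_card_Int:
  assumes "graph V E" "distinct xs"
  shows "card {j. j < length xs \<and> u \<in> cnbhd V E (xs ! j)} = card (cnbhd V E u \<inter> set xs)"
proof -
  have "card {j. j < length xs \<and> u \<in> cnbhd V E (xs ! j)}
      = length (filter (\<lambda>v. v \<in> cnbhd V E u) xs)"
    by (simp add: length_filter_conv_card cnbhd_sym[OF assms(1)])
  also have "\<dots> = card (cnbhd V E u \<inter> set xs)"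
    using distinct_length_filter[OF assms(2)] by simp
  finally show ?thesis .
qed

(* In this and the next characterisation the witness u is the footprint of x. *)
lemma legal_seq_snoc_iff:
  assumes "graph V E"
  shows "legal_seq V E (xs @ [x]) \<longleftrightarrow> legal_seq V E xs \<and> x \<in> V \<and> x \<notin> set xs
    \<and> (\<exists>u \<in> cnbhd V E x. cnbhd V E u \<inter> set xs = {})"
proof -
  let ?fresh = "\<lambda>ys i. cnbhd V E (ys ! i) - (\<Union>j<i. cnbhd V E (ys ! j)) \<noteq> {}"
  have prefix: "?fresh (xs @ [x]) i = ?fresh xs i" if "i < length xs" for i
    using that by (auto simp: nth_append)
  have "(\<Union>j<length xs. cnbhd V E (xs ! j)) = (\<Union>v \<in> set xs. cnbhd V E v)"
    unfolding set_conv_nth by auto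
  then have last: "?fresh (xs @ [x]) (length xs) \<longleftrightarrow> cnbhd V E x - (\<Union>v \<in> set xs. cnbhd V E v) \<noteq> {}"
    by (simp add: nth_append)
  have fresh_iff: "(xs \<noteq> [] \<longrightarrow> cnbhd V E x - (\<Union>v \<in> set xs. cnbhd V E v) \<noteq> {})
      \<longleftrightarrow> (\<exists>u \<in> cnbhd V E x. cnbhd V E u \<inter> set xs = {})" if "x \<in> V"
  proof (cases "xs = []")
    case True
    then show ?thesis
      using self_in_cnbhd[OF that] by auto
  next
    case False
    have "u \<notin> (\<Union>v \<in> set xs. cnbhd V E v) \<longleftrightarrow> cnbhd V E u \<inter> set xs = {}" for u
      using cnbhd_sym[OF assms] by blast
    with False show ?thesis
      by blast
  qed
  have "(\<forall>i < length (xs @ [x]). 1 \<le> i \<longrightarrow> ?fresh (xs @ [x]) i)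
      \<longleftrightarrow> (\<forall>i < length xs. 1 \<le> i \<longrightarrow> ?fresh xs i) \<and> (xs \<noteq> [] \<longrightarrow> ?fresh (xs @ [x]) (length xs))"
    unfolding length_append_singleton All_less_Suc using prefix by (auto simp: Suc_le_eq)
  with last fresh_iff show ?thesis
    unfolding legal_seq_def by auto
qed

lemma double_nbhd_seq_snoc_iff:
  assumes "graph V E"
  shows "double_nbhd_seq V E (xs @ [x]) \<longleftrightarrow> double_nbhd_seq V E xs \<and> x \<in> V \<and> x \<notin> set xs
    \<and> (\<exists>u \<in> cnbhd V E x. card (cnbhd V E u \<inter> set xs) \<le> 1)"
proof -
  let ?ok = "\<lambda>ys i. \<exists>u \<in> cnbhd V E (ys ! i). card {j. j < i \<and> u \<in> cnbhd V E (ys ! j)} \<le> 1"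
  have earlier: "{j. j < i \<and> u \<in> cnbhd V E ((xs @ [x]) ! j)} = {j. j < i \<and> u \<in> cnbhd V E (xs ! j)}"
    if "i \<le> length xs" for i u
    using that by (auto simp: nth_append)
  have prefix: "?ok (xs @ [x]) i = ?ok xs i" if "i < length xs" for i
    using that earlier[of i] by (simp add: nth_append)
  have last: "?ok (xs @ [x]) (length xs) \<longleftrightarrow> (\<exists>u \<in> cnbhd V E x. card (cnbhd V E u \<inter> set xs) \<le> 1)"
    if "distinct xs"
    using earlier[of "length xs"] card_dominators_eq_card_Int[OF assms that] by simp
  have "(\<forall>i < length (xs @ [x]). ?ok (xs @ [x]) i) \<longleftrightarrow> (\<forall>i < length xs. ?ok xs i) \<and> ?ok (xs @ [x]) (length xs)"
    unfolding length_append_singleton All_less_Suc using prefix by auto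
  with last show ?thesis
    unfolding double_nbhd_seq_def by auto
qed

lemma double_nbhd_seq_if_legal_seq:
  assumes "graph V E"
  shows "legal_seq V E xs \<Longrightarrow> double_nbhd_seq V E xs"
proof (induction xs rule: rev_induct)
  case Nil
  show ?case
    by (simp add: double_nbhd_seq_def)
next
  case (snoc x xs)
  then obtain u where "legal_seq V E xs" "x \<in> V" "x \<notin> set xs"
    and "u \<in> cnbhd V E x" "cnbhd V E u \<inter> set xs = {}"
    using legal_seq_snoc_iff[OF assms] by blast
  with snoc.IH show ?case
    using double_nbhd_seq_snoc_iff[OF assms] by fastforce
qed

lemma snoc_extension:
  assumes "finite V"
    and bounded: "\<And>xs. P xs \<Longrightarrow> distinct xs \<and> set xs \<subseteq> V"
    and step: "\<And>xs. P xs \<Longrightarrow> \<not> Q xs \<Longrightarrow> \<exists>x. P (xs @ [x])"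
  shows "P xs \<Longrightarrow> \<exists>ys. P (xs @ ys) \<and> Q (xs @ ys)"
proof (induction "card V - length xs" arbitrary: xs rule: less_induct)
  case less
  show ?case
  proof (cases "Q xs")
    case True
    with less.prems show ?thesis
      by (metis append_Nil2)
  next
    case False
    with step less.prems obtain x where x: "P (xs @ [x])"
      by blast
    have "length (xs @ [x]) \<le> card V"
      using bounded[OF x] assms(1) by (metis card_mono distinct_card)
    then have "card V - length (xs @ [x]) < card V - length xs"
      by simp
    from less.hyps[OF this x] show ?thesis
      by (metis append.assoc)
  qed
qed

lemma double_nbhd_seq_extends:
  assumes "graph V E" "no_isolated V E" "double_nbhd_seq V E xs"
  shows "\<exists>ys. double_dom_seq V E (xs @ ys)"
proof -
  have "\<exists>x. double_nbhd_seq V E (xs @ [x])"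
    if dns: "double_nbhd_seq V E xs" and not_dd: "\<not> double_dom_set V E (set xs)" for xs
  proof -
    have "set xs \<subseteq> V"
      using dns unfolding double_nbhd_seq_def by simp
    with not_dd obtain w where w: "w \<in> V" "card (cnbhd V E w \<inter> set xs) \<le> 1"
      unfolding double_dom_set_def by fastforce
    have "\<not> cnbhd V E w \<subseteq> set xs"
    proof
      assume "cnbhd V E w \<subseteq> set xs"
      then have "cnbhd V E w \<inter> set xs = cnbhd V E w"
        by blast
      with w two_le_card_cnbhd[OF assms(1,2) w(1)] show False
        by simp
    qed
    then obtain x where x: "x \<in> cnbhd V E w" "x \<notin> set xs"
      by blast
    have "x \<in> V"
      using x(1) cnbhd_subset[of V E w] by blast
    have "w \<in> cnbhd V E x"
      using x(1) cnbhd_sym[OF assms(1), of x w] by simp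
    with w x dns \<open>x \<in> V\<close> have "double_nbhd_seq V E (xs @ [x])"
      unfolding double_nbhd_seq_snoc_iff[OF assms(1)] by blast
    then show ?thesis ..
  qed
  moreover have "finite V"
    using assms(1) unfolding graph_def by simp
  moreover have "distinct ys \<and> set ys \<subseteq> V" if "double_nbhd_seq V E ys" for ys
    using that unfolding double_nbhd_seq_def by simp
  ultimately obtain ys where "double_nbhd_seq V E (xs @ ys) \<and> double_dom_set V E (set (xs @ ys))"
    using snoc_extension[where P = "double_nbhd_seq V E" and Q = "\<lambda>xs. double_dom_set V E (set xs)"]
      assms(3) by blast
  then show ?thesis
    unfolding double_dom_seq_def by blast
qed

lemma legal_seq_extends:
  assumes "graph V E" "legal_seq V E xs"
  shows "\<exists>ys. dominating_seq V E (xs @ ys)"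
proof -
  have "\<exists>x. legal_seq V E (xs @ [x])"
    if legal: "legal_seq V E xs" and "\<not> (\<forall>w \<in> V. \<exists>v \<in> set xs. w \<in> cnbhd V E v)" for xs
  proof -
    from that obtain w where w: "w \<in> V" "\<forall>v \<in> set xs. w \<notin> cnbhd V E v"
      by blast
    have "w \<notin> set xs"
      using w self_in_cnbhd[of w V E] by blast
    have "cnbhd V E w \<inter> set xs = {}"
      using w(2) cnbhd_sym[OF assms(1), of _ w] by blast
    with w legal \<open>w \<notin> set xs\<close> have "legal_seq V E (xs @ [w])"
      unfolding legal_seq_snoc_iff[OF assms(1)] using self_in_cnbhd[of w V E] by blast
    then show ?thesis ..
  qed
  moreover have "finite V"
    using assms(1) unfolding graph_def by simp
  moreover have "distinct ys \<and> set ys \<subseteq> V" if "legal_seq V E ys" for ys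
    using that unfolding legal_seq_def by simp
  ultimately obtain ys where
    "legal_seq V E (xs @ ys) \<and> (\<forall>w \<in> V. \<exists>v \<in> set (xs @ ys). w \<in> cnbhd V E v)"
    using snoc_extension[where P = "legal_seq V E" and Q = "\<lambda>xs. \<forall>w \<in> V. \<exists>v \<in> set xs. w \<in> cnbhd V E v"]
      assms(2) by blast
  then show ?thesis
    unfolding dominating_seq_def by blast
qed

lemma finite_lengths:
  assumes "finite V" and bounded: "\<And>xs. P xs \<Longrightarrow> distinct xs \<and> set xs \<subseteq> V"
  shows "finite {length xs | xs. P xs}"
proof -
  have "length xs \<le> card V" if "P xs" for xs
    using bounded[OF that] card_mono[OF assms(1)] distinct_card by metis
  then have "{length xs | xs. P xs} \<subseteq> {..card V}"
    by auto
  then show ?thesis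
    using finite_subset by blast
qed

lemma finite_dominating_seq_lengths:
  "graph V E \<Longrightarrow> finite {length xs | xs. dominating_seq V E xs}"
  by (rule finite_lengths) (auto simp: graph_def dominating_seq_def legal_seq_def)

lemma finite_double_dom_seq_lengths:
  "graph V E \<Longrightarrow> finite {length xs | xs. double_dom_seq V E xs}"
  by (rule finite_lengths) (auto simp: graph_def double_dom_seq_def double_nbhd_seq_def)

lemma length_le_grundy_dom:
  "graph V E \<Longrightarrow> dominating_seq V E xs \<Longrightarrow> length xs \<le> grundy_dom V E"
  unfolding grundy_dom_def by (rule Max_ge) (auto simp: finite_dominating_seq_lengths)

lemma length_le_grundy_double_dom:
  "graph V E \<Longrightarrow> double_dom_seq V E xs \<Longrightarrow> length xs \<le> grundy_double_dom V E"
  unfolding grundy_double_dom_def by (rule Max_ge) (auto simp: finite_double_dom_seq_lengths)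

lemma legal_seq_length_le_grundy_dom:
  assumes "graph V E" "legal_seq V E xs"
  shows "length xs \<le> grundy_dom V E"
proof -
  obtain ys where "dominating_seq V E (xs @ ys)"
    using legal_seq_extends[OF assms] by blast
  then have "length (xs @ ys) \<le> grundy_dom V E"
    by (rule length_le_grundy_dom[OF assms(1)])
  then show ?thesis
    by simp
qed

lemma grundy_dom_attained:
  assumes "graph V E"
  obtains xs where "dominating_seq V E xs" "length xs = grundy_dom V E"
proof -
  have "legal_seq V E []"
    unfolding legal_seq_def by simp
  then obtain ys where "dominating_seq V E ys"
    using legal_seq_extends[OF assms] by auto
  then have "{length xs | xs. dominating_seq V E xs} \<noteq> {}"
    by blast
  from Max_in[OF finite_dominating_seq_lengths[OF assms] this] that show ?thesis
    unfolding grundy_dom_def by auto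
qed

lemma grundy_double_dom_attained:
  assumes "graph V E" "no_isolated V E"
  obtains xs where "double_dom_seq V E xs" "length xs = grundy_double_dom V E"
proof -
  have "double_nbhd_seq V E []"
    unfolding double_nbhd_seq_def by simp
  then obtain ys where "double_dom_seq V E ys"
    using double_nbhd_seq_extends[OF assms] by auto
  then have "{length xs | xs. double_dom_seq V E xs} \<noteq> {}"
    by blast
  from Max_in[OF finite_double_dom_seq_lengths[OF assms(1)] this] that show ?thesis
    unfolding grundy_double_dom_def by auto
qed

lemma finite_double_dom_set_cards:
  assumes "graph V E"
  shows "finite {card D | D. double_dom_set V E D}"
proof -
  have "finite V"
    using assms unfolding graph_def by simp
  then have "{card D | D. double_dom_set V E D} \<subseteq> {..card V}"
    unfolding double_dom_set_def by (auto intro: card_mono)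
  then show ?thesis
    using finite_subset by blast
qed

lemma double_dom_number_le_card:
  "graph V E \<Longrightarrow> double_dom_set V E D \<Longrightarrow> double_dom_number V E \<le> card D"
  unfolding double_dom_number_def by (rule Min_le) (auto simp: finite_double_dom_set_cards)

lemma double_dom_set_vertices:
  assumes "graph V E" "no_isolated V E"
  shows "double_dom_set V E V"
  unfolding double_dom_set_def
  using two_le_card_cnbhd[OF assms] cnbhd_subset[of V E] by (simp add: Int_absorb2)

lemma double_dom_number_attained:
  assumes "graph V E" "no_isolated V E"
  obtains D where "double_dom_set V E D" "card D = double_dom_number V E"
proof -
  have "{card D | D. double_dom_set V E D} \<noteq> {}"
    using double_dom_set_vertices[OF assms] by blast
  from Min_in[OF finite_double_dom_set_cards[OF assms(1)] this] that show ?thesis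
    unfolding double_dom_number_def by auto
qed

lemma double_dom_set_card_bound:
  assumes "graph V E" "double_dom_set V E D"
  shows "2 * card V \<le> card D * (max_degree V E + 1)"
proof -
  have finV: "finite V" and DV: "D \<subseteq> V"
    using assms unfolding graph_def double_dom_set_def by auto
  then have finD: "finite D"
    by (rule finite_subset[rotated])
  have "2 * card V = (\<Sum>w\<in>V. 2::nat)"
    by simp
  also have "\<dots> \<le> (\<Sum>w\<in>V. card {d \<in> D. w \<in> cnbhd V E d})"
  proof (rule sum_mono)
    fix w
    assume "w \<in> V"
    moreover have "{d \<in> D. w \<in> cnbhd V E d} = cnbhd V E w \<inter> D"
      using cnbhd_sym[OF assms(1), of w] by blast
    ultimately show "2 \<le> card {d \<in> D. w \<in> cnbhd V E d}"
      using assms(2) unfolding double_dom_set_def by simp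
  qed
  also have "\<dots> = (\<Sum>d\<in>D. card (cnbhd V E d))"
  proof (rule sum_multicount_gen[OF finV finD])
    have "{w \<in> V. w \<in> cnbhd V E d} = cnbhd V E d" for d
      using cnbhd_subset[of V E d] by blast
    then show "\<forall>d\<in>D. card {w \<in> V. w \<in> cnbhd V E d} = card (cnbhd V E d)"
      by simp
  qed
  also have "\<dots> \<le> (\<Sum>d\<in>D. max_degree V E + 1)"
  proof (rule sum_mono)
    fix d
    assume "d \<in> D"
    with DV have "d \<in> V"
      by blast
    then have "degree V E d \<le> max_degree V E"
      unfolding max_degree_def using finV by simp
    then show "card (cnbhd V E d) \<le> max_degree V E + 1"
      using card_cnbhd[OF assms(1) \<open>d \<in> V\<close>] by simp
  qed
  also have "\<dots> = card D * (max_degree V E + 1)"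
    by simp
  finally show ?thesis .
qed

lemma double_nbhd_seq_last_footprint:
  assumes "graph V E" "double_nbhd_seq V E xs" "xs \<noteq> []"
  obtains u where "u \<in> V" "card (cnbhd V E u \<inter> set xs) \<le> 2"
proof -
  obtain ys x where xs: "xs = ys @ [x]"
    using rev_exhaust assms(3) by blast
  obtain u where u: "u \<in> cnbhd V E x" "card (cnbhd V E u \<inter> set ys) \<le> 1"
    using assms(2) unfolding xs double_nbhd_seq_snoc_iff[OF assms(1)] by blast
  have "card (cnbhd V E u \<inter> set xs) \<le> card (insert x (cnbhd V E u \<inter> set ys))"
    unfolding xs by (rule card_mono) auto
  also have "\<dots> \<le> Suc (card (cnbhd V E u \<inter> set ys))"
    by (simp add: card_insert_if)
  finally have "card (cnbhd V E u \<inter> set xs) \<le> 2"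
    using u(2) by simp
  moreover have "u \<in> V"
    using u(1) cnbhd_subset[of V E x] by blast
  ultimately show ?thesis
    using that by blast
qed

lemma card_cnbhd_le_card_Int_add_card_Diff:
  assumes "graph V E"
  shows "card (cnbhd V E u) \<le> card (cnbhd V E u \<inter> S) + card (V - S)"
proof -
  have "finite V"
    using assms unfolding graph_def by simp
  moreover have "cnbhd V E u \<subseteq> (cnbhd V E u \<inter> S) \<union> (V - S)"
    using cnbhd_subset[of V E u] by blast
  ultimately have "card (cnbhd V E u) \<le> card ((cnbhd V E u \<inter> S) \<union> (V - S))"
    using finite_cnbhd[OF assms] by (intro card_mono) auto
  also have "\<dots> \<le> card (cnbhd V E u \<inter> S) + card (V - S)"
    by (rule card_Un_le)
  finally show ?thesis .
qed

lemma double_dom_seq_length_bound: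
  assumes "graph V E" "V \<noteq> {}" "double_dom_seq V E xs"
  shows "length xs + min_degree V E \<le> card V + 1"
proof -
  have finV: "finite V"
    using assms(1) unfolding graph_def by simp
  have dns: "double_nbhd_seq V E xs" and dd: "double_dom_set V E (set xs)"
    using assms(3) unfolding double_dom_seq_def by auto
  then have distinct: "distinct xs" and xsV: "set xs \<subseteq> V"
    unfolding double_nbhd_seq_def by auto
  obtain w where "w \<in> V"
    using assms(2) by blast
  with dd have "2 \<le> card (cnbhd V E w \<inter> set xs)"
    unfolding double_dom_set_def by blast
  then have "xs \<noteq> []"
    by auto
  then obtain u where u: "u \<in> V" "card (cnbhd V E u \<inter> set xs) \<le> 2"
    using double_nbhd_seq_last_footprint[OF assms(1) dns] by blast
  have "card (V - set xs) = card V - length xs"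
    using card_Diff_subset[OF _ xsV] distinct_card[OF distinct] by simp
  then have "card (cnbhd V E u) \<le> 2 + (card V - length xs)"
    using card_cnbhd_le_card_Int_add_card_Diff[OF assms(1), of u "set xs"] u(2) by simp
  moreover have "length xs \<le> card V"
    using card_mono[OF finV xsV] distinct_card[OF distinct] by simp
  moreover have "min_degree V E \<le> degree V E u"
    unfolding min_degree_def using finV u(1) by simp
  ultimately show ?thesis
    using card_cnbhd[OF assms(1) u(1)] by linarith
qed

lemma legal_seq_not_double_dom_set:
  assumes "graph V E" "legal_seq V E xs" "xs \<noteq> []"
  shows "\<not> double_dom_set V E (set xs)"
proof -
  obtain ys x where xs: "xs = ys @ [x]"
    using rev_exhaust assms(3) by blast
  obtain u where u: "u \<in> cnbhd V E x" "cnbhd V E u \<inter> set ys = {}"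
    using assms(2) unfolding xs legal_seq_snoc_iff[OF assms(1)] by blast
  have "u \<in> V"
    using u(1) cnbhd_subset[of V E x] by blast
  moreover have "cnbhd V E u \<inter> set xs \<subseteq> {x}"
    using u(2) unfolding xs by auto
  then have "card (cnbhd V E u \<inter> set xs) \<le> card {x}"
    by (rule card_mono[rotated]) simp
  ultimately show ?thesis
    unfolding double_dom_set_def by force
qed

lemma double_nbhd_seq_split_legal:
  assumes "graph V E"
  shows "double_nbhd_seq V E xs \<Longrightarrow> \<exists>ys zs. legal_seq V E ys \<and> legal_seq V E zs
    \<and> set ys \<inter> set zs = {} \<and> set ys \<union> set zs = set xs \<and> length ys + length zs = length xs"
proof (induction xs rule: rev_induct)
  case Nil
  have "legal_seq V E []"
    unfolding legal_seq_def by simp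
  then show ?case
    by auto
next
  case (snoc x xs)
  obtain u where dns: "double_nbhd_seq V E xs" and x: "x \<in> V" "x \<notin> set xs"
    and u: "u \<in> cnbhd V E x" "card (cnbhd V E u \<inter> set xs) \<le> 1"
    using snoc.prems unfolding double_nbhd_seq_snoc_iff[OF assms] by blast
  obtain ys zs where ys: "legal_seq V E ys" and zs: "legal_seq V E zs"
    and disjoint: "set ys \<inter> set zs = {}" and union: "set ys \<union> set zs = set xs"
    and length: "length ys + length zs = length xs"
    using snoc.IH[OF dns] by blast
  have "cnbhd V E u \<inter> set ys = {} \<or> cnbhd V E u \<inter> set zs = {}"
  proof (rule ccontr)
    assume "\<not> ?thesis"
    then obtain y z where "y \<in> cnbhd V E u \<inter> set ys" "z \<in> cnbhd V E u \<inter> set zs"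
      by blast
    with disjoint union have "y \<noteq> z" "{y, z} \<subseteq> cnbhd V E u \<inter> set xs"
      by auto
    then have "card {y, z} \<le> card (cnbhd V E u \<inter> set xs)"
      by (intro card_mono) auto
    with \<open>y \<noteq> z\<close> u(2) show False
      by simp
  qed
  then show ?case
  proof
    assume "cnbhd V E u \<inter> set ys = {}"
    with ys x u(1) union have "legal_seq V E (ys @ [x])"
      unfolding legal_seq_snoc_iff[OF assms] by blast
    with zs disjoint union length x(2) show ?case
      by (intro exI[of _ "ys @ [x]"] exI[of _ zs]) auto
  next
    assume "cnbhd V E u \<inter> set zs = {}"
    with zs x u(1) union have "legal_seq V E (zs @ [x])"
      unfolding legal_seq_snoc_iff[OF assms] by blast
    with ys disjoint union length x(2) show ?case
      by (intro exI[of _ ys] exI[of _ "zs @ [x]"]) auto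
  qed
qed

lemma grundy_double_dom_le_twice_grundy_dom:
  assumes "graph V E" "no_isolated V E"
  shows "grundy_double_dom V E \<le> 2 * grundy_dom V E"
proof -
  obtain xs where xs: "double_dom_seq V E xs" "length xs = grundy_double_dom V E"
    by (rule grundy_double_dom_attained[OF assms])
  then obtain ys zs where "legal_seq V E ys" "legal_seq V E zs" "length ys + length zs = length xs"
    using double_nbhd_seq_split_legal[OF assms(1)] unfolding double_dom_seq_def by blast
  with xs(2) show ?thesis
    using legal_seq_length_le_grundy_dom[OF assms(1)] by (metis add_mono mult_2)
qed

lemma grundy_dom_less_grundy_double_dom:
  assumes "graph V E" "no_isolated V E" "V \<noteq> {}"
  shows "grundy_dom V E < grundy_double_dom V E"
proof -
  obtain xs where xs: "dominating_seq V E xs" "length xs = grundy_dom V E"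
    by (rule grundy_dom_attained[OF assms(1)])
  then have legal: "legal_seq V E xs"
    unfolding dominating_seq_def by simp
  have "xs \<noteq> []"
    using xs(1) assms(3) unfolding dominating_seq_def by auto
  obtain ys where dds: "double_dom_seq V E (xs @ ys)"
    using double_nbhd_seq_extends[OF assms(1,2) double_nbhd_seq_if_legal_seq[OF assms(1) legal]]
    by blast
  have "ys \<noteq> []"
    using dds legal_seq_not_double_dom_set[OF assms(1) legal \<open>xs \<noteq> []\<close>]
    unfolding double_dom_seq_def by auto
  then have "length xs < length (xs @ ys)"
    by simp
  also have "\<dots> \<le> grundy_double_dom V E"
    by (rule length_le_grundy_double_dom[OF assms(1) dds])
  finally show ?thesis
    using xs(2) by simp
qed

lemma double_dom_number_lower_bound:
  assumes "graph V E" "no_isolated V E"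
  shows "2 * real (card V) / (real (max_degree V E) + 1) \<le> real (double_dom_number V E)"
proof -
  obtain D where D: "double_dom_set V E D" "card D = double_dom_number V E"
    by (rule double_dom_number_attained[OF assms])
  have "real (2 * card V) \<le> real (card D * (max_degree V E + 1))"
    using double_dom_set_card_bound[OF assms(1) D(1)] by (simp only: of_nat_le_iff)
  then show ?thesis
    using D(2) by (simp add: pos_divide_le_eq algebra_simps)
qed

lemma double_dom_number_le_grundy_double_dom:
  assumes "graph V E" "no_isolated V E"
  shows "double_dom_number V E \<le> grundy_double_dom V E"
proof -
  obtain xs where xs: "double_dom_seq V E xs" "length xs = grundy_double_dom V E"
    by (rule grundy_double_dom_attained[OF assms])
  then have "double_dom_number V E \<le> card (set xs)"
    using double_dom_number_le_card[OF assms(1)] unfolding double_dom_seq_def by blast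
  also have "card (set xs) = grundy_double_dom V E"
    using xs unfolding double_dom_seq_def double_nbhd_seq_def by (simp add: distinct_card)
  finally show ?thesis .
qed

lemma grundy_double_dom_upper_bound:
  assumes "graph V E" "V \<noteq> {}" "no_isolated V E"
  shows "grundy_double_dom V E + min_degree V E \<le> card V + 1"
proof -
  obtain xs where "double_dom_seq V E xs" "length xs = grundy_double_dom V E"
    by (rule grundy_double_dom_attained[OF assms(1,3)])
  then show ?thesis
    using double_dom_seq_length_bound[OF assms(1,2)] by metis
qed

theorem proposition1:
  fixes V :: "'a set" and E :: "'a \<Rightarrow> 'a \<Rightarrow> bool"
  assumes "graph V E" and "V \<noteq> {}" and "no_isolated V E"
  shows "2 * real (card V) / (real (max_degree V E) + 1) \<le> real (double_dom_number V E)
       \<and> double_dom_number V E \<le> grundy_double_dom V E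
       \<and> grundy_double_dom V E \<le> card V + 1 - min_degree V E
       \<and> grundy_dom V E + 1 \<le> grundy_double_dom V E
       \<and> grundy_double_dom V E \<le> 2 * grundy_dom V E"
  using double_dom_number_lower_bound[OF assms(1,3)]
    double_dom_number_le_grundy_double_dom[OF assms(1,3)]
    grundy_double_dom_upper_bound[OF assms]
    grundy_dom_less_grundy_double_dom[OF assms(1,3,2)]
    grundy_double_dom_le_twice_grundy_dom[OF assms(1,3)]
  by simp

end
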